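(* Let $P$ and $Q$ be rhombuses whose vertices all lie on the integer lattice $\mathbb{Z}^2$, and suppose that $P$ and $Q$ form an amicable pair, i.e. the area of $P$ equals the perimeter of $Q$ and the area of $Q$ equals the perimeter of $P$. Then $P$ and $Q$ are both equable, i.e. the area of each equals its own perimeter.
   Context: A polygon is a lattice polygon if all its vertices lie on the integer lattice $\mathbb{Z}^2$. A polygon is equable if its area equals its perimeter. Two polygons form an amicable pair if the area of each equals the perimeter of the other; an equable polygon paired with itself is allowed as an (trivial) amicable pair, and $P$, $Q$ need not be distinct. *)

theory Defs
  imports Complex_Main
begin

type_synonym lattice_point = "int \<times> int"

definition ldist :: "lattice_point \<Rightarrow> lattice_point \<Rightarrow> real" where
  "ldist p q = sqrt (real_of_int ((fst p - fst q)^2 + (snd p - snd q)^2))"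

text \<open>Quadrilateral with vertices A, B, C, D in cyclic order.  It is a rhombus iff its
 four sides have equal length and it is non-degenerate (the diagonals AC and BD are
 non-trivial); these conditions force a genuine rhombus with positive area.\<close>
definition lattice_rhombus :: "lattice_point \<Rightarrow> lattice_point \<Rightarrow> lattice_point \<Rightarrow> lattice_point \<Rightarrow> bool" where
  "lattice_rhombus A B C D \<longleftrightarrow>
     ldist A B = ldist B C \<and> ldist B C = ldist C D \<and> ldist C D = ldist D A \<and>
     A \<noteq> C \<and> B \<noteq> D"

definition quad_perimeter :: "lattice_point \<Rightarrow> lattice_point \<Rightarrow> lattice_point \<Rightarrow> lattice_point \<Rightarrow> real" where
  "quad_perimeter A B C D = ldist A B + ldist B C + ldist C D + ldist D A"

text \<open>Shoelace formula.\<close>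
definition quad_area :: "lattice_point \<Rightarrow> lattice_point \<Rightarrow> lattice_point \<Rightarrow> lattice_point \<Rightarrow> real" where
  "quad_area A B C D = \<bar>real_of_int
      ((fst A * snd B - fst B * snd A) + (fst B * snd C - fst C * snd B)
     + (fst C * snd D - fst D * snd C) + (fst D * snd A - fst A * snd D))\<bar> / 2"

end

theory Submission
  imports Defs
begin

text \<open>A lattice rhombus is a parallelogram spanned by side vectors \<open>u, v \<in> \<int>\<^sup>2\<close> of common squared
  length \<open>s\<close>; its area is \<open>\<bar>u \<times> v\<bar>\<close>, its perimeter is \<open>4\<surd>s\<close>, and
  \<open>(u \<times> v)\<^sup>2 + (u \<cdot> v)\<^sup>2 = s\<^sup>2\<close>. For an amicable pair the area \<open>4\<surd>s\<^sub>Q\<close> of \<open>P\<close> is an integer,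
  so \<open>s\<^sub>Q = q\<^sup>2\<close> and likewise \<open>s\<^sub>P = p\<^sup>2\<close>, and both \<open>p\<^sup>4 - 16q\<^sup>2\<close> and \<open>q\<^sup>4 - 16p\<^sup>2\<close> are squares.
  If \<open>p < q\<close>, factoring \<open>q\<^sup>4 - z\<^sup>2 = 16p\<^sup>2\<close> leaves so little room that \<open>q\<^sup>2 = 2p\<^sup>2 + 2\<close> is the
  only possibility not excluded by size or congruences, and then \<open>p\<^sup>4 - 32p\<^sup>2 - 32\<close> lies strictly
  between consecutive squares. Hence \<open>p = q\<close>, and both rhombi are equable.\<close>

lemma ldist_eq_iff:
  "ldist p q = ldist r t \<longleftrightarrow>
     (fst p - fst q)^2 + (snd p - snd q)^2 = (fst r - fst t)^2 + (snd r - snd t)^2"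
  unfolding ldist_def by (simp del: of_int_add of_int_power)

lemma equilateral_quadrilateral_parallelogram:
  fixes b1 b2 c1 c2 d1 d2 :: "'a :: linordered_idom"
  assumes AB_BC: "b1^2 + b2^2 = (b1 - c1)^2 + (b2 - c2)^2"
    and BC_CD: "(b1 - c1)^2 + (b2 - c2)^2 = (c1 - d1)^2 + (c2 - d2)^2"
    and CD_DA: "(c1 - d1)^2 + (c2 - d2)^2 = d1^2 + d2^2"
    and "(c1, c2) \<noteq> (0, 0)" and "(b1, b2) \<noteq> (d1, d2)"
  shows "c1 = b1 + d1 \<and> c2 = b2 + d2"
proof -
  \<comment> \<open>Both \<open>c\<close> and \<open>b + d\<close> are orthogonal to the diagonal \<open>b - d\<close>, hence parallel;
    the Lagrange identity then makes them equal.\<close>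
  define w1 w2 y1 y2 where "w1 = b1 - d1" "w2 = b2 - d2" "y1 = b1 + d1" "y2 = b2 + d2"
  have w_nonzero: "w1 \<noteq> 0 \<or> w2 \<noteq> 0"
    using \<open>(b1, b2) \<noteq> (d1, d2)\<close> unfolding w1_w2_y1_y2_def by auto
  have c_dot: "c1^2 + c2^2 = c1 * y1 + c2 * y2" and w_perp_c: "w1 * c1 + w2 * c2 = 0"
    using AB_BC BC_CD CD_DA unfolding w1_w2_y1_y2_def by (simp_all add: power2_eq_square algebra_simps)
  have w_perp_y: "w1 * y1 + w2 * y2 = 0"
    using AB_BC BC_CD CD_DA unfolding w1_w2_y1_y2_def by (simp add: power2_eq_square algebra_simps)
  have "w1 * (c1 * y2 - c2 * y1) = y2 * (w1 * c1 + w2 * c2) - c2 * (w1 * y1 + w2 * y2)"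
    and "w2 * (c1 * y2 - c2 * y1) = c1 * (w1 * y1 + w2 * y2) - y1 * (w1 * c1 + w2 * c2)"
    by (simp_all add: algebra_simps)
  then have "w1 * (c1 * y2 - c2 * y1) = 0" "w2 * (c1 * y2 - c2 * y1) = 0"
    using w_perp_c w_perp_y by simp_all
  then have c_parallel_y: "c1 * y2 - c2 * y1 = 0"
    using w_nonzero by auto
  have "(c1^2 + c2^2) * (y1^2 + y2^2) = (c1 * y1 + c2 * y2)^2 + (c1 * y2 - c2 * y1)^2"
    by (simp add: power2_eq_square algebra_simps)
  also have "\<dots> = (c1^2 + c2^2) * (c1^2 + c2^2)"
    using c_dot c_parallel_y by (simp add: power2_eq_square)
  finally have "y1^2 + y2^2 = c1^2 + c2^2"
    using \<open>(c1, c2) \<noteq> (0, 0)\<close> by auto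
  then have "(c1 - y1)^2 + (c2 - y2)^2 = 0"
    using c_dot by (simp add: power2_eq_square algebra_simps)
  then show ?thesis
    unfolding w1_w2_y1_y2_def by simp
qed

lemma lattice_rhombus_parallelogram:
  assumes "lattice_rhombus A B C D"
  shows "C = (fst B + fst D - fst A, snd B + snd D - snd A)"
proof -
  obtain a1 a2 b1 b2 c1 c2 d1 d2
    where pts: "A = (a1, a2)" "B = (b1, b2)" "C = (c1, c2)" "D = (d1, d2)"
    by (metis prod.exhaust)
  have "c1 - a1 = (b1 - a1) + (d1 - a1) \<and> c2 - a2 = (b2 - a2) + (d2 - a2)"
  proof (rule equilateral_quadrilateral_parallelogram)
    show "(b1 - a1)^2 + (b2 - a2)^2 = (b1 - a1 - (c1 - a1))^2 + (b2 - a2 - (c2 - a2))^2"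
      "(b1 - a1 - (c1 - a1))^2 + (b2 - a2 - (c2 - a2))^2
         = (c1 - a1 - (d1 - a1))^2 + (c2 - a2 - (d2 - a2))^2"
      "(c1 - a1 - (d1 - a1))^2 + (c2 - a2 - (d2 - a2))^2 = (d1 - a1)^2 + (d2 - a2)^2"
      "(c1 - a1, c2 - a2) \<noteq> (0, 0)" "(b1 - a1, b2 - a2) \<noteq> (d1 - a1, d2 - a2)"
      using assms unfolding lattice_rhombus_def ldist_eq_iff pts by (auto simp: power2_commute)
  qed
  then show ?thesis
    unfolding pts by simp
qed

lemma quad_area_parallelogram:
  "quad_area A B (fst B + fst D - fst A, snd B + snd D - snd A) D =
     \<bar>real_of_int ((fst B - fst A) * (snd D - snd A) - (snd B - snd A) * (fst D - fst A))\<bar>"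
proof -
  define X where "X = (fst B - fst A) * (snd D - snd A) - (snd B - snd A) * (fst D - fst A)"
  have "fst A * snd B - fst B * snd A + (fst B * (snd B + snd D - snd A) - (fst B + fst D - fst A) * snd B)
      + ((fst B + fst D - fst A) * snd D - fst D * (snd B + snd D - snd A)) + (fst D * snd A - fst A * snd D)
      = 2 * X"
    unfolding X_def by (simp add: algebra_simps)
  then show ?thesis
    unfolding quad_area_def X_def[symmetric] by simp
qed

lemma lattice_rhombus_area_perimeter:
  assumes "lattice_rhombus A B C D"
  obtains s X Y :: int
  where "0 < s" "X^2 + Y^2 = s^2" "quad_area A B C D = \<bar>real_of_int X\<bar>"
    "quad_perimeter A B C D = 4 * sqrt (real_of_int s)"
proof
  define u1 u2 v1 v2 where
    "u1 = fst B - fst A" "u2 = snd B - snd A" "v1 = fst D - fst A" "v2 = snd D - snd A"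
  define s where "s = u1^2 + u2^2"
  have sides: "ldist A B = ldist B C" "ldist B C = ldist C D" "ldist C D = ldist D A"
    using assms unfolding lattice_rhombus_def by auto
  then have "v1^2 + v2^2 = s"
    unfolding s_def u1_u2_v1_v2_def ldist_eq_iff by (simp add: power2_commute)
  moreover have "(u1 * v2 - u2 * v1)^2 + (u1 * v1 + u2 * v2)^2 = (u1^2 + u2^2) * (v1^2 + v2^2)"
    by (simp add: power2_eq_square algebra_simps)
  ultimately show "(u1 * v2 - u2 * v1)^2 + (u1 * v1 + u2 * v2)^2 = s^2"
    unfolding s_def by (simp add: power2_eq_square)
  have "B \<noteq> D"
    using assms unfolding lattice_rhombus_def by simp
  with \<open>v1^2 + v2^2 = s\<close> have "s \<noteq> 0"
    unfolding s_def u1_u2_v1_v2_def by (auto simp: prod_eq_iff)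
  then show "0 < s"
    unfolding s_def by (simp add: add_pos_nonneg order_less_le)
  show "quad_area A B C D = \<bar>real_of_int (u1 * v2 - u2 * v1)\<bar>"
    using lattice_rhombus_parallelogram[OF assms] quad_area_parallelogram
    unfolding u1_u2_v1_v2_def by simp
  have "ldist A B = sqrt (real_of_int s)"
    unfolding ldist_def s_def u1_u2_v1_v2_def by (simp add: power2_commute)
  then show "quad_perimeter A B C D = 4 * sqrt (real_of_int s)"
    using sides unfolding quad_perimeter_def by simp
qed

lemma abs_eq_4_sqrt_imp_square:
  fixes X s :: int
  assumes "\<bar>real_of_int X\<bar> = 4 * sqrt (real_of_int s)" and "0 < s"
  obtains q where "0 < q" "s = q^2" "\<bar>X\<bar> = 4 * q"
proof -
  have "real_of_int (X^2) = real_of_int (4^2 * s)"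
    using arg_cong[OF assms(1), of "\<lambda>x. x^2"] \<open>0 < s\<close> by (simp add: power_mult_distrib)
  then have X_sq: "X^2 = 4^2 * s"
    by (simp only: of_int_eq_iff)
  then have "4 dvd X"
    by (metis dvd_triv_left pow_divides_pow_iff zero_less_numeral)
  then obtain k where "X = 4 * k"
    by blast
  with X_sq have "s = \<bar>k\<bar>^2"
    by (simp add: power_mult_distrib)
  with \<open>0 < s\<close> \<open>X = 4 * k\<close> show thesis
    by (intro that[of "\<bar>k\<bar>"]) (auto simp: abs_mult)
qed

lemma square_mod_4: "(x::int)^2 mod 4 \<in> {0, 1}"
proof -
  have "x mod 4 \<in> {0, 1, 2, 3}"
    by auto
  then have "(x mod 4)^2 mod 4 \<in> {0, 1}"
    by auto
  then show ?thesis
    by (simp add: power_mod)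
qed

lemma not_square_between_consecutive_squares:
  fixes k y :: int
  assumes "0 \<le> k" and "k^2 < y^2" and "y^2 < (k + 1)^2"
  shows False
proof -
  have lower: "k^2 < \<bar>y\<bar>^2" and upper: "\<bar>y\<bar>^2 < (k + 1)^2"
    using assms by simp_all
  have "k < \<bar>y\<bar>" "\<bar>y\<bar> < k + 1"
    using power_less_imp_less_base[OF lower] power_less_imp_less_base[OF upper] \<open>0 \<le> k\<close>
    by simp_all
  then show False by linarith
qed

lemma sixteen_mul_eq_diff_of_squares:
  fixes P Q Z :: int
  assumes "16 * P + Z^2 = Q^2" and "0 < P" and "0 < Q"
  obtains i where "0 < i" "2 * i \<le> Q" "4 * P = i * (Q - i)"
proof -
  define j where "j = Q - \<bar>Z\<bar>"
  have "\<bar>Z\<bar>^2 < Q^2"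
    using assms(1,2) by simp
  then have "\<bar>Z\<bar> < Q"
    using \<open>0 < Q\<close> by (metis less_imp_le power_less_imp_less_base)
  have j_prod: "16 * P = j * (2 * Q - j)"
    using assms(1) unfolding j_def by (simp add: power2_eq_square algebra_simps)
  have "even j"
  proof (rule ccontr)
    assume "odd j"
    then have "odd (j * (2 * Q - j))" by simp
    with j_prod show False by (metis even_mult_iff even_numeral)
  qed
  then obtain i where "j = 2 * i" by blast
  show thesis
  proof
    show "0 < i" "2 * i \<le> Q"
      using \<open>\<bar>Z\<bar> < Q\<close> \<open>j = 2 * i\<close> unfolding j_def by auto
    show "4 * P = i * (Q - i)"
      using j_prod \<open>j = 2 * i\<close> by (simp add: algebra_simps)
  qed
qed

lemma no_square_fourth_power_sub_32:
  fixes p q Y :: int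
  assumes double: "q^2 = 2 * p^2 + 2" and Y: "16 * q^2 + Y^2 = p^4"
  shows False
proof -
  define n where "n = \<bar>p\<bar>"
  define P where "P = n^2"
  define y where "y = \<bar>Y\<bar>"
  have "even (q^2)"
    using double by simp
  then obtain r where "q = 2 * r"
    by auto
  with double have "P = 2 * r^2 - 1"
    unfolding P_def n_def by (simp add: power_mult_distrib)
  then have "odd P"
    by simp
  then have "odd n"
    unfolding P_def by simp
  have y_sq: "y^2 = P^2 - 32 * P - 32"
    using double Y unfolding y_def P_def n_def by (simp add: power_mult [symmetric])
  show False
  proof (cases "n \<ge> 13")
    case True
    then have "169 \<le> P"
      unfolding P_def using power_mono[of 13 n 2] by simp
    then have "(P - 17)^2 < y^2" "y^2 < (P - 16)^2"
      using y_sq by (simp_all add: power2_eq_square algebra_simps)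
    then show False
      using not_square_between_consecutive_squares[of "P - 17" y] \<open>169 \<le> P\<close> by simp
  next
    case False
    with \<open>odd n\<close> have "n = 1 \<or> n = 3 \<or> n = 5 \<or> n = 7 \<or> n = 9 \<or> n = 11"
      unfolding n_def by presburger
    \<comment> \<open>\<open>n = 1, 3, 5\<close> make \<open>y\<^sup>2\<close> negative; \<open>n = 7, 9, 11\<close> give \<open>y\<^sup>2 = 801, 3937, 10737\<close>.\<close>
    then have "y^2 < 0 \<or> 28^2 < y^2 \<and> y^2 < (28 + 1)^2 \<or> 62^2 < y^2 \<and> y^2 < (62 + 1)^2
        \<or> 103^2 < y^2 \<and> y^2 < (103 + 1)^2"
      using y_sq unfolding P_def by auto
    then show False
      using not_square_between_consecutive_squares[of 28 y] not_square_between_consecutive_squares[of 62 y]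
        not_square_between_consecutive_squares[of 103 y]
      by auto
  qed
qed

lemma no_amicable_side_lengths_lt:
  fixes p q Y Z :: int
  assumes "0 < p" "p < q" and Y: "16 * q^2 + Y^2 = p^4" and Z: "16 * p^2 + Z^2 = q^4"
  shows False
proof -
  define P Q where "P = p^2" "Q = q^2"
  have "(p + 1)^2 \<le> q^2"
    using assms(1,2) by (intro power_mono) auto
  then have Q_gap: "P + 2 * p + 1 \<le> Q"
    unfolding P_Q_def by (simp add: power2_eq_square algebra_simps)
  have "2 \<le> p"
  proof (rule ccontr)
    assume "\<not> 2 \<le> p"
    with \<open>0 < p\<close> have "p = 1"
      by linarith
    then have "4 \<le> q^2" "16 * q^2 + Y^2 = 1"
      using Q_gap Y unfolding P_Q_def by simp_all
    then show False
      using zero_le_power2[of Y] by linarith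
  qed
  have "0 < P" "0 < Q"
    using assms(1,2) unfolding P_Q_def by simp_all
  moreover have "16 * P + Z^2 = Q^2"
    using Z unfolding P_Q_def by (simp add: power_mult [symmetric])
  ultimately obtain i where i: "0 < i" "2 * i \<le> Q" "4 * P = i * (Q - i)"
    using sixteen_mul_eq_diff_of_squares by blast
  have "i \<le> 4"
  proof (rule ccontr)
    assume "\<not> i \<le> 4"
    with i(2) have "0 \<le> (i - 5) * (Q - i - 5)"
      by simp
    then have "5 * Q - 25 \<le> 4 * P"
      using i(3) by (simp add: algebra_simps)
    with Q_gap \<open>2 \<le> p\<close> \<open>0 < P\<close> show False
      by linarith
  qed
  with i(1) consider "i = 1" | "i = 2" | "i = 3" | "i = 4"
    by linarith
  then show False
  proof cases
    case 1
    then have "(2 * p)^2 < q^2" "q^2 < (2 * p + 1)^2"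
      using i(3) \<open>0 < p\<close> unfolding P_Q_def by (simp_all add: power2_eq_square algebra_simps)
    then show False
      using not_square_between_consecutive_squares[of "2 * p" q] \<open>0 < p\<close> by simp
  next
    case 2
    then have "q^2 = 2 * p^2 + 2"
      using i(3) unfolding P_Q_def by simp
    then show False
      using no_square_fourth_power_sub_32 Y by blast
  next
    case 3
    then have "4 * P + 9 = 3 * Q"
      using i(3) by simp
    moreover have "Q mod 4 \<in> {0, 1}"
      unfolding P_Q_def by (rule square_mod_4)
    ultimately show False
      by simp presburger
  next
    case 4
    with i(3) Q_gap \<open>2 \<le> p\<close> show False
      by simp
  qed
qed

lemma amicable_side_lengths_eq:
  fixes p q Y Z :: int
  assumes "0 < p" "0 < q" "16 * q^2 + Y^2 = p^4" "16 * p^2 + Z^2 = q^4"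
  shows "p = q"
  using no_amicable_side_lengths_lt assms by (metis linorder_neqE)

theorem mainTheorem1:
  fixes A B C D E F G H :: lattice_point
  assumes "lattice_rhombus A B C D" and "lattice_rhombus E F G H"
    and "quad_area A B C D = quad_perimeter E F G H"
    and "quad_area E F G H = quad_perimeter A B C D"
  shows "quad_area A B C D = quad_perimeter A B C D \<and> quad_area E F G H = quad_perimeter E F G H"
proof -
  obtain sP XP YP where P: "0 < sP" "XP^2 + YP^2 = sP^2" "quad_area A B C D = \<bar>real_of_int XP\<bar>"
    "quad_perimeter A B C D = 4 * sqrt (real_of_int sP)"
    using lattice_rhombus_area_perimeter[OF assms(1)] .
  obtain sQ XQ YQ where Q: "0 < sQ" "XQ^2 + YQ^2 = sQ^2" "quad_area E F G H = \<bar>real_of_int XQ\<bar>"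
    "quad_perimeter E F G H = 4 * sqrt (real_of_int sQ)"
    using lattice_rhombus_area_perimeter[OF assms(2)] .
  have "\<bar>real_of_int XP\<bar> = 4 * sqrt (real_of_int sQ)"
    using P(3) Q(4) assms(3) by simp
  then obtain q where q: "0 < q" "sQ = q^2" "\<bar>XP\<bar> = 4 * q"
    using abs_eq_4_sqrt_imp_square Q(1) by blast
  have "\<bar>real_of_int XQ\<bar> = 4 * sqrt (real_of_int sP)"
    using Q(3) P(4) assms(4) by simp
  then obtain p where p: "0 < p" "sP = p^2" "\<bar>XQ\<bar> = 4 * p"
    using abs_eq_4_sqrt_imp_square P(1) by blast
  have "XP^2 = (4 * q)^2" "XQ^2 = (4 * p)^2"
    using p(3) q(3) by (metis power2_abs)+
  then have "16 * q^2 + YP^2 = p^4" "16 * p^2 + YQ^2 = q^4"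
    using P(2) Q(2) p(2) q(2) by (simp_all add: power_mult_distrib flip: power_mult)
  then have "p = q"
    using amicable_side_lengths_eq p(1) q(1) by blast
  then show ?thesis
    using P Q p(2) q(2) assms(3,4) by simp
qed

end
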